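(* Let $E=(A\subset B)\in\mathcal S$ have Klein tableau $\Pi=[\gamma^0,\ldots,\gamma^e;\varphi^2,\ldots,\varphi^e]$ and let $k\le\ell\le e$ be natural numbers. Then the embeddings $E\!\downarrow_{\ell-k}|^k$ and $E|^\ell\!\downarrow_{\ell-k}$ coincide as objects of $\mathcal S$ (both equal $(p^{\ell-k}A/p^\ell A\subset B/p^\ell A)$), and their Klein tableau is $$[\gamma^{\ell-k},\gamma^{\ell-k+1},\ldots,\gamma^\ell;\varphi^{\ell-k+2},\ldots,\varphi^\ell]=\Pi|_k^\ell.$$ In particular, for $k=2$ the Klein tableau is $\Pi|_2^\ell=[\gamma^{\ell-2},\gamma^{\ell-1},\gamma^\ell;\varphi^\ell]$.
   Context: Let $R$ be a commutative principal ideal domain, $p$ a generator of a maximal ideal, $k_0=R/(p)$. A $p$-module is a finite-length $R$-module annihilated by some power of $p$. For a $p$-module $B$, $\mathrm{type}(B)$ is the partition $\beta$ with conjugate $\beta'_i=\dim_{k_0}p^{i-1}B/p^iB$. $\mathcal S$ is the category of embeddings $(A\subset B)$ of submodules in $p$-modules. For $E=(A\subset B)$: $E\!\downarrow_s=(p^sA\subset B)$ and $E|^\ell=(A/p^\ell A\subset B/p^\ell A)$. Partitions are drawn with the $i$-th column of length equal to the $i$-th part, rows numbered from the top. Klein tableau of $E=(A\subset B)$, $e$ the exponent of $A$: $\Pi(E)=[\gamma^0,\ldots,\gamma^e;\varphi^2,\ldots,\varphi^e]$ with $\gamma^i=\mathrm{type}(B/p^iA)$, and $\varphi^\ell$ the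 unique map from the boxes of the skew diagram $\gamma^\ell\setminus\gamma^{\ell-1}$ to positive integers, weakly increasing from left to right in each row, such that for $r\ge1$ the number of boxes in row $m$ with value $r$ equals $(\gamma^{\ell,r})'_m-(\gamma^{\ell,r-1})'_m$, where $\gamma^{\ell,r}=\mathrm{type}\big(B/(p^\ell A+p(p^{\ell-2}A\cap p^rB))\big)$. Restriction: for $u\le\ell\le e$, $\Pi|_u^\ell=[\gamma^{\ell-u},\ldots,\gamma^\ell;\varphi^{\ell-u+2},\ldots,\varphi^\ell]$, regarded as a Klein tableau whose stripe $\gamma^{\ell-u+j}\setminus\gamma^{\ell-u+j-1}$ is labelled $j$, subscripts retained. *)

theory Defs
  imports Complex_Main
begin

definition r_ideal :: "'r::comm_ring_1 set \<Rightarrow> bool" where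
  "r_ideal I \<longleftrightarrow> 0 \<in> I \<and> (\<forall>x\<in>I. \<forall>y\<in>I. x + y \<in> I) \<and> (\<forall>r. \<forall>x\<in>I. r * x \<in> I)"

definition principal_ideal_domain :: "'r::idom itself \<Rightarrow> bool" where
  "principal_ideal_domain _ \<longleftrightarrow> (\<forall>I::'r set. r_ideal I \<longrightarrow> (\<exists>a. I = {a * x | x. True}))"

definition maximal_ideal :: "'r::comm_ring_1 set \<Rightarrow> bool" where
  "maximal_ideal I \<longleftrightarrow> r_ideal I \<and> I \<noteq> UNIV \<and>
     (\<forall>J. r_ideal J \<and> I \<subseteq> J \<longrightarrow> J = I \<or> J = UNIV)"

definition msum :: "'m::ab_group_add set \<Rightarrow> 'm set \<Rightarrow> 'm set" where
  "msum C D = {c + d | c d. c \<in> C \<and> d \<in> D}"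

definition pw :: "('r::comm_ring_1 \<Rightarrow> 'm::ab_group_add \<Rightarrow> 'm) \<Rightarrow> 'r \<Rightarrow> nat \<Rightarrow> 'm set \<Rightarrow> 'm set" where
  "pw sc p s X = sc (p ^ s) ` X"

definition finite_length :: "('r::comm_ring_1 \<Rightarrow> 'm::ab_group_add \<Rightarrow> 'm) \<Rightarrow> 'm set \<Rightarrow> bool" where
  "finite_length sc B \<longleftrightarrow> (\<exists>N::nat. \<forall>(f::nat \<Rightarrow> 'm set) n.
      (\<forall>i\<le>n. module.subspace sc (f i) \<and> f i \<subseteq> B) \<and> (\<forall>i<n. f i \<subset> f (Suc i)) \<longrightarrow> n \<le> N)"

definition p_module :: "('r::comm_ring_1 \<Rightarrow> 'm::ab_group_add \<Rightarrow> 'm) \<Rightarrow> 'r \<Rightarrow> 'm set \<Rightarrow> bool" where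
  "p_module sc p B \<longleftrightarrow> module.subspace sc B \<and> finite_length sc B \<and>
      (\<exists>n. \<forall>b\<in>B. sc (p ^ n) b = 0)"

text \<open>k0-dimension of the quotient N/M (where M \<subseteq> N and p N \<subseteq> M, so N/M is a
  k0 = R/(p) vector space): the least size of a spanning set.\<close>
definition qdim :: "('r::comm_ring_1 \<Rightarrow> 'm::ab_group_add \<Rightarrow> 'm) \<Rightarrow> 'm set \<Rightarrow> 'm set \<Rightarrow> nat" where
  "qdim sc N M = (LEAST n. \<exists>S. finite S \<and> card S = n \<and> S \<subseteq> N \<and>
                               N \<subseteq> msum (module.span sc S) M)"

section \<open>Partitions as Young diagrams (sets of boxes (row, column), 1-indexed)\<close>

text \<open>type(B/D): the partition whose conjugate has parts
  beta'_m = dim_k0 p^(m-1)(B/D) / p^m(B/D); row m (from the top) has length beta'_m.\<close>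
definition ptype :: "('r::comm_ring_1 \<Rightarrow> 'm::ab_group_add \<Rightarrow> 'm) \<Rightarrow> 'r \<Rightarrow> 'm set \<Rightarrow> 'm set \<Rightarrow> (nat \<times> nat) set" where
  "ptype sc p B D = {(m, c). 1 \<le> m \<and> 1 \<le> c \<and>
      c \<le> qdim sc (msum (pw sc p (m - 1) B) D) (msum (pw sc p m B) D)}"

definition rowlen :: "(nat \<times> nat) set \<Rightarrow> nat \<Rightarrow> nat" where
  "rowlen Y m = card {c. (m, c) \<in> Y}"

text \<open>A triple (A, B, C) with C \<subseteq> A \<subseteq> B submodules of the ambient module stands for the
  embedding (A/C \<subseteq> B/C). An embedding (A \<subseteq> B) is the triple (A, B, {0}).\<close>
type_synonym 'm emb = "'m set \<times> 'm set \<times> 'm set"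

definition emb_down :: "('r::comm_ring_1 \<Rightarrow> 'm::ab_group_add \<Rightarrow> 'm) \<Rightarrow> 'r \<Rightarrow> nat \<Rightarrow> 'm emb \<Rightarrow> 'm emb" where
  "emb_down sc p s E = (case E of (A, B, C) \<Rightarrow> (msum (pw sc p s A) C, B, C))"

definition emb_restr :: "('r::comm_ring_1 \<Rightarrow> 'm::ab_group_add \<Rightarrow> 'm) \<Rightarrow> 'r \<Rightarrow> nat \<Rightarrow> 'm emb \<Rightarrow> 'm emb" where
  "emb_restr sc p l E = (case E of (A, B, C) \<Rightarrow> (A, B, msum (pw sc p l A) C))"

definition kexp :: "('r::comm_ring_1 \<Rightarrow> 'm::ab_group_add \<Rightarrow> 'm) \<Rightarrow> 'r \<Rightarrow> 'm emb \<Rightarrow> nat" where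
  "kexp sc p E = (case E of (A, B, C) \<Rightarrow> (LEAST e. pw sc p e A \<subseteq> C))"

definition kgamma :: "('r::comm_ring_1 \<Rightarrow> 'm::ab_group_add \<Rightarrow> 'm) \<Rightarrow> 'r \<Rightarrow> 'm emb \<Rightarrow> nat \<Rightarrow> (nat \<times> nat) set" where
  "kgamma sc p E i = (case E of (A, B, C) \<Rightarrow> ptype sc p B (msum (pw sc p i A) C))"

text \<open>gamma^{l,r} = type((B/C) / (p^l A' + p (p^(l-2) A' \<inter> p^r B'))) with A' = A/C, B' = B/C,
  computed via preimages in B.\<close>
definition kgamma2 :: "('r::comm_ring_1 \<Rightarrow> 'm::ab_group_add \<Rightarrow> 'm) \<Rightarrow> 'r \<Rightarrow> 'm emb \<Rightarrow> nat \<Rightarrow> nat \<Rightarrow> (nat \<times> nat) set" where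
  "kgamma2 sc p E l r = (case E of (A, B, C) \<Rightarrow>
     ptype sc p B (msum (msum (pw sc p l A) C)
        (pw sc p 1 (msum (pw sc p (l - 2) A) C \<inter> msum (pw sc p r B) C))))"

text \<open>phi^l: the unique filling of the skew diagram gamma^l \ gamma^(l-1) (value 0 outside it)\<close>
definition kphi :: "('r::comm_ring_1 \<Rightarrow> 'm::ab_group_add \<Rightarrow> 'm) \<Rightarrow> 'r \<Rightarrow> 'm emb \<Rightarrow> nat \<Rightarrow> (nat \<times> nat \<Rightarrow> nat)" where
  "kphi sc p E l = (THE f.
     let Sk = kgamma sc p E l - kgamma sc p E (l - 1) in
     (\<forall>x. x \<notin> Sk \<longrightarrow> f x = 0) \<and>
     (\<forall>x\<in>Sk. 1 \<le> f x) \<and>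
     (\<forall>m c c'. (m, c) \<in> Sk \<and> (m, c') \<in> Sk \<and> c \<le> c' \<longrightarrow> f (m, c) \<le> f (m, c')) \<and>
     (\<forall>r\<ge>1. \<forall>m\<ge>1. int (card {c. (m, c) \<in> Sk \<and> f (m, c) = r}) =
          int (rowlen (kgamma2 sc p E l r) m) - int (rowlen (kgamma2 sc p E l (r - 1)) m)))"

definition klein_tableau :: "('r::comm_ring_1 \<Rightarrow> 'm::ab_group_add \<Rightarrow> 'm) \<Rightarrow> 'r \<Rightarrow> 'm emb \<Rightarrow>
    (nat \<times> nat) set list \<times> (nat \<times> nat \<Rightarrow> nat) list" where
  "klein_tableau sc p E =
     (map (kgamma sc p E) [0..<kexp sc p E + 1], map (kphi sc p E) [2..<kexp sc p E + 1])"

text \<open>Pi|_u^l = [gamma^(l-u), ..., gamma^l; phi^(l-u+2), ..., phi^l] (list position j of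
  the gamma list is stripe label j; filling values retained)\<close>
definition tab_restrict :: "(nat \<times> nat) set list \<times> (nat \<times> nat \<Rightarrow> nat) list \<Rightarrow> nat \<Rightarrow> nat \<Rightarrow>
    (nat \<times> nat) set list \<times> (nat \<times> nat \<Rightarrow> nat) list" where
  "tab_restrict T u l = (case T of (gs, fs) \<Rightarrow>
     (take (u + 1) (drop (l - u) gs), take (u - 1) (drop (l - u) fs)))"

end

theory Submission
  imports Defs
begin

text \<open>Put \<open>A' = p\<^sup>s A\<close> and \<open>C = p\<^sup>l A\<close> with \<open>s \<le> l\<close>. Every \<open>p\<^sup>j A\<close> with \<open>j \<le> l\<close> already
  contains \<open>C\<close>, so adding \<open>C\<close> to it changes nothing, and the modular law moves \<open>C\<close> out of
  the intersection defining \<open>\<gamma>^{l,r}\<close>. Hence every module entering the Klein tableau of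
  \<open>(A'/C \<subseteq> B/C)\<close> at index \<open>i\<close> is the one entering the tableau of \<open>(A \<subseteq> B)\<close> at index \<open>s + i\<close>.
  The exponent of \<open>A'/C\<close> is \<open>l - s\<close>: a smaller one would give \<open>p\<^sup>j A \<subseteq> p\<^sup>l A\<close> for some
  \<open>j < l\<close>, so the chain \<open>p\<^sup>j A \<supseteq> p\<^sup>j\<^sup>+\<^sup>1 A \<supseteq> \<dots>\<close> would be constant from \<open>j\<close> on; as a
  power of \<open>p\<close> kills \<open>A\<close>, this forces \<open>p\<^sup>j A = 0\<close>, against \<open>l \<le> e\<close>.\<close>

lemma msum_zero_right [simp]: "msum X {0} = X"
  by (auto simp: msum_def)

context module
begin

lemma pw_pw: "pw scale p a (pw scale p b X) = pw scale p (a + b) X"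
  by (auto simp: pw_def image_image power_add)

lemma subspace_pw: "subspace X \<Longrightarrow> subspace (pw scale p n X)"
  unfolding pw_def
proof (rule subspaceI)
  assume X: "subspace X"
  show "0 \<in> scale (p ^ n) ` X"
    using X subspace_0 by force
  show "x + y \<in> scale (p ^ n) ` X" if "x \<in> scale (p ^ n) ` X" "y \<in> scale (p ^ n) ` X" for x y
    using that X by (auto simp: scale_right_distrib[symmetric] intro: subspace_add)
  show "scale c x \<in> scale (p ^ n) ` X" if x: "x \<in> scale (p ^ n) ` X" for c x
  proof -
    obtain a where "a \<in> X" "x = scale (p ^ n) a"
      using x by blast
    then have "scale c x = scale (p ^ n) (scale c a)" "scale c a \<in> X"
      using X by (simp_all add: mult.commute subspace_scale)
    then show ?thesis
      by blast
  qed
qed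

lemma pw_antimono: "subspace X \<Longrightarrow> a \<le> b \<Longrightarrow> pw scale p b X \<subseteq> pw scale p a X"
  using pw_pw[of p a "b - a" X] by (auto simp: pw_def intro: subspace_scale)

lemma msum_absorb_right: "subspace X \<Longrightarrow> Y \<subseteq> X \<Longrightarrow> 0 \<in> Y \<Longrightarrow> msum X Y = X"
  unfolding msum_def by (auto intro: subspace_add) (metis add.right_neutral)

lemma msum_absorb_nested:
  "subspace X \<Longrightarrow> Z \<subseteq> X \<Longrightarrow> 0 \<in> Z \<Longrightarrow> msum X (msum Y Z) = msum X Y"
  unfolding msum_def
proof safe
  fix x y z assume "subspace X" "Z \<subseteq> X" "x \<in> X" "y \<in> Y" "z \<in> Z"
  then have "x + (y + z) = (x + z) + y" "x + z \<in> X"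
    by (auto simp: add_ac intro: subspace_add)
  then show "\<exists>c d. x + (y + z) = c + d \<and> c \<in> X \<and> d \<in> Y"
    using \<open>y \<in> Y\<close> by blast
next
  fix x y assume "0 \<in> Z" "x \<in> X" "y \<in> Y"
  then have "y \<in> {c + d |c d. c \<in> Y \<and> d \<in> Z}"
    by (metis (mono_tags, lifting) add.right_neutral mem_Collect_eq)
  then show "\<exists>c d. x + y = c + d \<and> c \<in> X \<and> d \<in> {c + d |c d. c \<in> Y \<and> d \<in> Z}"
    using \<open>x \<in> X\<close> by blast
qed

lemma Int_msum_modular: "subspace X \<Longrightarrow> Z \<subseteq> X \<Longrightarrow> X \<inter> msum Y Z = msum (X \<inter> Y) Z"
  unfolding msum_def
proof safe
  fix y z assume "subspace X" "Z \<subseteq> X" "y + z \<in> X" "y \<in> Y" "z \<in> Z"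
  then have "y \<in> X"
    using subspace_diff[of X "y + z" z] by auto
  then show "\<exists>c d. y + z = c + d \<and> c \<in> X \<inter> Y \<and> d \<in> Z"
    using \<open>y \<in> Y\<close> \<open>z \<in> Z\<close> by blast
qed (auto intro: subspace_add)

lemma pw_msum: "pw scale p n (msum X Y) = msum (pw scale p n X) (pw scale p n Y)"
  unfolding pw_def msum_def
proof (intro equalityI subsetI)
  fix w assume "w \<in> scale (p ^ n) ` {x + y |x y. x \<in> X \<and> y \<in> Y}"
  then show "w \<in> {x + y |x y. x \<in> scale (p ^ n) ` X \<and> y \<in> scale (p ^ n) ` Y}"
    by (auto simp: scale_right_distrib) blast
next
  fix w assume "w \<in> {x + y |x y. x \<in> scale (p ^ n) ` X \<and> y \<in> scale (p ^ n) ` Y}"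
  then obtain x y where "x \<in> X" "y \<in> Y" "w = scale (p ^ n) (x + y)"
    by (auto simp: scale_right_distrib)
  then show "w \<in> scale (p ^ n) ` {x + y |x y. x \<in> X \<and> y \<in> Y}"
    by blast
qed

lemma pw_subset_imp_zero:
  assumes A: "subspace A" and killed: "\<forall>a\<in>A. scale (p ^ n) a = 0"
    and "j < l" and sub: "pw scale p j A \<subseteq> pw scale p l A"
  shows "pw scale p j A \<subseteq> {0}"
proof -
  have step: "pw scale p j A \<subseteq> pw scale p (Suc j) A"
    using sub pw_antimono[OF A, of "Suc j" l p] \<open>j < l\<close> by auto
  have stable: "pw scale p j A \<subseteq> pw scale p (j + m) A" for m
  proof (induction m)
    case (Suc m)
    have "pw scale p m (pw scale p j A) \<subseteq> pw scale p m (pw scale p (Suc j) A)"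
      using step unfolding pw_def by (rule image_mono)
    then show ?case
      using Suc.IH by (simp add: pw_pw add.commute)
  qed simp
  have "pw scale p (j + n) A = pw scale p j (pw scale p n A)"
    by (simp add: pw_pw add.commute)
  also have "\<dots> \<subseteq> {0}"
    using killed by (auto simp: pw_def)
  finally show ?thesis
    using stable[of n] by blast
qed

lemma msum_pw_truncation:
  "subspace A \<Longrightarrow> j \<le> l \<Longrightarrow> msum (pw scale p j A) (pw scale p l A) = pw scale p j A"
  by (intro msum_absorb_right subspace_pw pw_antimono subspace_0)

lemma kexp_truncation:
  assumes A: "subspace A" and killed: "\<forall>a\<in>A. scale (p ^ n) a = 0"
    and "s \<le> l" and l_le: "l \<le> kexp scale p (A, B, {0})"
  shows "kexp scale p (pw scale p s A, B, pw scale p l A) = l - s"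
  unfolding kexp_def prod.case
proof (rule Least_equality)
  show "pw scale p (l - s) (pw scale p s A) \<subseteq> pw scale p l A"
    using \<open>s \<le> l\<close> by (simp add: pw_pw)
next
  fix e assume "pw scale p e (pw scale p s A) \<subseteq> pw scale p l A"
  show "l - s \<le> e"
  proof (rule ccontr)
    assume "\<not> l - s \<le> e"
    then have "e + s < l" by simp
    moreover have "pw scale p (e + s) A \<subseteq> {0}"
      by (rule pw_subset_imp_zero[OF A killed \<open>e + s < l\<close>])
        (use \<open>pw scale p e (pw scale p s A) \<subseteq> _\<close> in \<open>simp add: pw_pw\<close>)
    then have "kexp scale p (A, B, {0}) \<le> e + s"
      unfolding kexp_def by (simp add: Least_le)
    ultimately show False
      using l_le by simp
  qed
qed

lemma kgamma_truncation:
  "subspace A \<Longrightarrow> s + i \<le> l \<Longrightarrow>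
    kgamma scale p (pw scale p s A, B, pw scale p l A) i = kgamma scale p (A, B, {0}) (s + i)"
  by (simp add: kgamma_def pw_pw msum_pw_truncation add.commute)

lemma kgamma2_truncation:
  assumes A: "subspace A" and "2 \<le> i" "s + i \<le> l"
  shows "kgamma2 scale p (pw scale p s A, B, pw scale p l A) i r
       = kgamma2 scale p (A, B, {0}) (s + i) r"
proof -
  let ?C = "pw scale p l A" and ?D = "pw scale p (s + i - 2) A \<inter> pw scale p r B"
  have "msum (pw scale p i (pw scale p s A)) ?C = pw scale p (s + i) A"
    using assms by (simp add: pw_pw msum_pw_truncation add.commute)
  moreover have "msum (pw scale p (i - 2) (pw scale p s A)) ?C = pw scale p (s + i - 2) A"
    using assms by (simp add: pw_pw msum_pw_truncation add.commute)
  moreover have "pw scale p (s + i - 2) A \<inter> msum (pw scale p r B) ?C = msum ?D ?C"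
    using assms by (intro Int_msum_modular subspace_pw pw_antimono) simp_all
  moreover have "pw scale p 1 (msum ?D ?C) = msum (pw scale p 1 ?D) (pw scale p (1 + l) A)"
    by (simp add: pw_msum pw_pw)
  moreover have "msum (pw scale p (s + i) A) (msum (pw scale p 1 ?D) (pw scale p (1 + l) A))
      = msum (pw scale p (s + i) A) (pw scale p 1 ?D)"
    using assms by (intro msum_absorb_nested subspace_pw pw_antimono subspace_0) simp_all
  ultimately show ?thesis
    unfolding kgamma2_def prod.case msum_zero_right by simp
qed

lemma kphi_truncation:
  "subspace A \<Longrightarrow> 2 \<le> i \<Longrightarrow> s + i \<le> l \<Longrightarrow>
    kphi scale p (pw scale p s A, B, pw scale p l A) i = kphi scale p (A, B, {0}) (s + i)"
  unfolding kphi_def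
  by (simp add: kgamma_truncation kgamma2_truncation Suc_diff_le[symmetric])

lemma klein_tableau_truncation:
  assumes A: "subspace A" and killed: "\<forall>a\<in>A. scale (p ^ n) a = 0"
    and "s \<le> l" "l \<le> kexp scale p (A, B, {0})"
  shows "klein_tableau scale p (pw scale p s A, B, pw scale p l A)
       = (map (\<lambda>i. kgamma scale p (A, B, {0}) (s + i)) [0..<l - s + 1],
          map (\<lambda>i. kphi scale p (A, B, {0}) (s + i)) [2..<l - s + 1])"
  unfolding klein_tableau_def kexp_truncation[OF assms]
  using assms by (auto intro!: map_cong simp del: upt_Suc simp: kgamma_truncation kphi_truncation)

end

lemma tab_restrict_map_upt:
  assumes "k \<le> l" "l \<le> K"
  shows "tab_restrict (map g [0..<K + 1], map f [2..<K + 1]) k l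
       = (map (\<lambda>i. g (l - k + i)) [0..<k + 1], map (\<lambda>i. f (l - k + i)) [2..<k + 1])"
  using assms
  by (auto simp del: upt_Suc simp: tab_restrict_def nth_take nth_drop Suc_diff_le
      intro!: nth_equalityI)

theorem lemma10:
  fixes sc :: "'r::idom \<Rightarrow> 'm::ab_group_add \<Rightarrow> 'm"
    and p :: 'r and A B :: "'m set" and k l :: nat
  assumes pid: "principal_ideal_domain TYPE('r)"
    and pmax: "maximal_ideal {p * x | x. True}"
    and modl: "module sc"
    and Bp: "p_module sc p B"
    and Asub: "module.subspace sc A" "A \<subseteq> B"
    and kl: "k \<le> l" "l \<le> kexp sc p (A, B, {0})"
  shows "emb_restr sc p k (emb_down sc p (l - k) (A, B, {0}))
           = emb_down sc p (l - k) (emb_restr sc p l (A, B, {0}))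
       \<and> emb_down sc p (l - k) (emb_restr sc p l (A, B, {0})) = (pw sc p (l - k) A, B, pw sc p l A)
       \<and> klein_tableau sc p (emb_down sc p (l - k) (emb_restr sc p l (A, B, {0})))
           = tab_restrict (klein_tableau sc p (A, B, {0})) k l
       \<and> (k = 2 \<longrightarrow> tab_restrict (klein_tableau sc p (A, B, {0})) k l
           = ([kgamma sc p (A, B, {0}) (l - 2), kgamma sc p (A, B, {0}) (l - 1),
               kgamma sc p (A, B, {0}) l], [kphi sc p (A, B, {0}) l]))"
proof -
  interpret module sc
    by (rule modl)
  obtain n where killed: "\<forall>a\<in>A. sc (p ^ n) a = 0"
    using Bp Asub(2) unfolding p_module_def by blast
  define E where "E = (A, B, {0::'m})"
  define E' where "E' = (pw sc p (l - k) A, B, pw sc p l A)"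
  have restr_down: "emb_restr sc p k (emb_down sc p (l - k) E) = E'"
    using kl by (simp add: E_def E'_def emb_restr_def emb_down_def pw_pw)
  have down_restr: "emb_down sc p (l - k) (emb_restr sc p l E) = E'"
    using kl Asub(1) by (simp add: E_def E'_def emb_restr_def emb_down_def msum_pw_truncation)
  let ?T = "(map (\<lambda>i. kgamma sc p E (l - k + i)) [0..<k + 1],
             map (\<lambda>i. kphi sc p E (l - k + i)) [2..<k + 1])"
  have tableau': "klein_tableau sc p E' = ?T"
    using klein_tableau_truncation[OF Asub(1) killed, of "l - k" l B] kl
    by (simp add: E_def E'_def)
  have restrict: "tab_restrict (klein_tableau sc p E) k l = ?T"
    unfolding klein_tableau_def E_def using kl by (rule tab_restrict_map_upt)
  have restrict_2: "tab_restrict (klein_tableau sc p E) k l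
      = ([kgamma sc p E (l - 2), kgamma sc p E (l - 1), kgamma sc p E l], [kphi sc p E l])"
    if "k = 2"
    using restrict that kl by (simp add: numeral_eq_Suc)
  show ?thesis
    unfolding E_def[symmetric] E'_def[symmetric]
    using restr_down down_restr tableau' restrict restrict_2 by metis
qed

end
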